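(* Consider a passive, minimal interconnected system $\Sigma_c=(A_c,B_c,C_c,D_c)$ consisting of $k$ passive, minimal subsystems $\Sigma_1,\dots,\Sigma_k$, a positive semi-definite interconnection matrix $S$ and an external input matrix $\mathcal{B}$. If $\Sigma_c$ is reduced to $\hat{\Sigma}_c$ using the Passive Interconnected Balanced Truncation (PIBT) algorithm described in the context, then the reduced subsystems $\hat{\Sigma}_j$, $j\in\{1,\dots,k\}$, and the reduced interconnected system $\hat{\Sigma}_c$ are passive.
   Context: A square, minimal system $\Sigma=(A,B,C,D)$, $\dot x=Ax+Bu$, $y=Cx+Du$, is passive iff there is $\Xi=\Xi^\top\succ0$ with $\begin{bmatrix}A^\top\Xi+\Xi A & \Xi B-C^\top\\ B^\top\Xi-C & -(D+D^\top)\end{bmatrix}\preceq0$ (positive real lemma). Subsystems $\Sigma_j=(A_j,B_j,C_j,D_j)$ with states $x_j\in\mathbb{R}^{n_j}$, inputs $v_j$ and outputs $z_j$ in $\mathbb{R}^{p_j}$ are passive and minimal. Their parallel composition is $\Sigma_b=(A_b,B_b,C_b,D_b)$ with $A_b=\mathrm{diag}(A_1,\dots,A_k)$ etc. and stacked states/inputs/outputs $x_b,v_b,z_b$. The interconnection is $v_b=-Sz_b+\mathcal{B}u_c$, $y_c=\mathcal{B}^\top z_b$ with $S\succeq0$ such that $I+SD_b$, $I+D_bS$ are nonsingular, giving $A_c=A_b-B_b\mathcal{D}_2SC_b$, $B_c=B_b\mathcal{D}_2\mathcal{B}$, $C_c=\mathcal{B}^\top\mathcal{D}_1C_b$, $D_c=\mathcal{B}^\top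 D_b\mathcal{D}_2\mathcal{B}$, $\mathcal{D}_1=(I+D_bS)^{-1}$, $\mathcal{D}_2=(I+SD_b)^{-1}$; $\Sigma_c$ is assumed asymptotically stable. It was shown earlier that such a negative feedback interconnection of a passive $\Sigma_b$ with $S\succeq0$ and $\mathcal{B}$ is passive. PIBT: (1) compute the controllability Gramian $P_c$ of $\Sigma_c$ from $0=A_cP_c+P_cA_c^\top+B_cB_c^\top$ and partition it into blocks $P_{i,j}\in\mathbb{R}^{n_i\times n_j}$ according to the subsystem states; (2) for each $j$ compute the (minimal) available storage $\Xi_j$ solving the positive real LMI above for $(A_j,B_j,C_j,D_j)$; (3) balance $\Sigma_j$ with input Gramian $X_i=P_{j,j}$ and output Gramian $X_o=\Xi_j$: Cholesky factors $X_i=R_i^\top R_i$, $X_o=R_o^\top R_o$, SVD $R_oR_i^\top=U\Gamma V$, $T=\Gamma^{-1/2}U^\top R_o$, $T^{-1}=R_i^\top V\Gamma^{-1/2}$, balanced realization $(TA_jT^{-1},TB_j,C_jT^{-1},D_j)$, for which the transformed Gramians both equal the diagonal sorted $\Gamma$; (4) partition the balanced realization as $\begin{bmatrix}\tilde A_{11}&\tilde A_{12}\\ \tilde A_{21}&\tilde A_{22}\end{bmatrix}$, $\begin{bmatrix}\tilde B_1\\ \tilde B_2\end{bmatrix}$, $[\tilde C_1\ \tilde C_2]$, with the first block corresponding to the largest diagonal entries of $\Gamma$, and keep $\hat{\Sigma}_j=(\tilde A_{11},\tilde B_1,\tilde C_1,D_j)$; (5) interconnect the $\hat{\Sigma}_j$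 with $S$ and $\mathcal{B}$ via the same formulas to obtain $\hat{\Sigma}_c$. *)

theory Defs
  imports "Jordan_Normal_Form.Matrix" "Jordan_Normal_Form.Char_Poly"
begin

text \<open>A (square) LTI system x' = A x + B u, y = C x + D u is represented by the
  tuple (A, B, C, D) of real matrices.\<close>

type_synonym sys = "real mat \<times> real mat \<times> real mat \<times> real mat"

definition sys_A :: "sys \<Rightarrow> real mat" where "sys_A \<Sigma> = (case \<Sigma> of (A,B,C,D) \<Rightarrow> A)"
definition sys_B :: "sys \<Rightarrow> real mat" where "sys_B \<Sigma> = (case \<Sigma> of (A,B,C,D) \<Rightarrow> B)"
definition sys_C :: "sys \<Rightarrow> real mat" where "sys_C \<Sigma> = (case \<Sigma> of (A,B,C,D) \<Rightarrow> C)"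
definition sys_D :: "sys \<Rightarrow> real mat" where "sys_D \<Sigma> = (case \<Sigma> of (A,B,C,D) \<Rightarrow> D)"

definition sdim :: "sys \<Rightarrow> nat" where "sdim \<Sigma> = dim_row (sys_A \<Sigma>)"
definition iodim :: "sys \<Rightarrow> nat" where "iodim \<Sigma> = dim_col (sys_B \<Sigma>)"

definition sys_wf :: "sys \<Rightarrow> nat \<Rightarrow> nat \<Rightarrow> bool" where
  "sys_wf \<Sigma> n p \<longleftrightarrow> sys_A \<Sigma> \<in> carrier_mat n n \<and> sys_B \<Sigma> \<in> carrier_mat n p
     \<and> sys_C \<Sigma> \<in> carrier_mat p n \<and> sys_D \<Sigma> \<in> carrier_mat p p"

definition psd_mat :: "nat \<Rightarrow> real mat \<Rightarrow> bool" where
  "psd_mat n M \<longleftrightarrow> M \<in> carrier_mat n n \<and> transpose_mat M = M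
     \<and> (\<forall>v \<in> carrier_vec n. 0 \<le> v \<bullet> (M *\<^sub>v v))"

definition pd_mat :: "nat \<Rightarrow> real mat \<Rightarrow> bool" where
  "pd_mat n M \<longleftrightarrow> M \<in> carrier_mat n n \<and> transpose_mat M = M
     \<and> (\<forall>v \<in> carrier_vec n. v \<noteq> 0\<^sub>v n \<longrightarrow> 0 < v \<bullet> (M *\<^sub>v v))"

definition pr_lmi_mat :: "sys \<Rightarrow> real mat \<Rightarrow> real mat" where
  "pr_lmi_mat \<Sigma> X = (case \<Sigma> of (A,B,C,D) \<Rightarrow>
     four_block_mat (transpose_mat A * X + X * A) (X * B - transpose_mat C)
                    (transpose_mat B * X - C) (- (D + transpose_mat D)))"

definition pr_lmi :: "sys \<Rightarrow> nat \<Rightarrow> nat \<Rightarrow> real mat \<Rightarrow> bool" where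
  "pr_lmi \<Sigma> n p X \<longleftrightarrow> psd_mat (n + p) (- pr_lmi_mat \<Sigma> X)"

text \<open>Passivity, via the positive real lemma: a square system admitting X = X^T > 0
  satisfying the positive real LMI.\<close>
definition is_passive :: "sys \<Rightarrow> bool" where
  "is_passive \<Sigma> \<longleftrightarrow> (\<exists>n p. sys_wf \<Sigma> n p \<and> (\<exists>X. pd_mat n X \<and> pr_lmi \<Sigma> n p X))"

text \<open>Kalman controllability: the controllability matrix [B, AB, ..., A^(n-1) B]
  has full row rank n, i.e. its rows are linearly independent.\<close>
definition controllable :: "nat \<Rightarrow> real mat \<Rightarrow> real mat \<Rightarrow> bool" where
  "controllable n A B \<longleftrightarrow> (\<forall>v \<in> carrier_vec n.
      (\<forall>i<n. transpose_mat ((A ^\<^sub>m i) * B) *\<^sub>v v = 0\<^sub>v (dim_col B)) \<longrightarrow> v = 0\<^sub>v n)"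

definition observable :: "nat \<Rightarrow> real mat \<Rightarrow> real mat \<Rightarrow> bool" where
  "observable n A C \<longleftrightarrow> controllable n (transpose_mat A) (transpose_mat C)"

definition is_minimal :: "sys \<Rightarrow> bool" where
  "is_minimal \<Sigma> \<longleftrightarrow> (\<exists>n p. sys_wf \<Sigma> n p \<and> controllable n (sys_A \<Sigma>) (sys_B \<Sigma>)
                        \<and> observable n (sys_A \<Sigma>) (sys_C \<Sigma>))"

definition asymp_stable :: "sys \<Rightarrow> bool" where
  "asymp_stable \<Sigma> \<longleftrightarrow> (\<forall>z::complex.
      poly (map_poly complex_of_real (char_poly (sys_A \<Sigma>))) z = 0 \<longrightarrow> Re z < 0)"

definition inv_mat :: "nat \<Rightarrow> real mat \<Rightarrow> real mat" where
  "inv_mat n M = (SOME N. N \<in> carrier_mat n n \<and> M * N = 1\<^sub>m n \<and> N * M = 1\<^sub>m n)"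

definition parallel :: "sys list \<Rightarrow> sys" where
  "parallel \<Sigma>s = (diag_block_mat (map sys_A \<Sigma>s), diag_block_mat (map sys_B \<Sigma>s),
                   diag_block_mat (map sys_C \<Sigma>s), diag_block_mat (map sys_D \<Sigma>s))"

text \<open>Interconnection v_b = -S z_b + Bcal u_c, y_c = Bcal^T z_b.\<close>
definition interconnect :: "sys \<Rightarrow> real mat \<Rightarrow> real mat \<Rightarrow> sys" where
  "interconnect \<Sigma>b S Bc = (case \<Sigma>b of (Ab, Bb, Cb, Db) \<Rightarrow>
     (let q = dim_row Db;
          D1 = inv_mat q (1\<^sub>m q + Db * S);
          D2 = inv_mat q (1\<^sub>m q + S * Db)
      in (Ab - Bb * D2 * S * Cb, Bb * D2 * Bc,
          transpose_mat Bc * D1 * Cb, transpose_mat Bc * Db * D2 * Bc)))"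

definition state_offset :: "sys list \<Rightarrow> nat \<Rightarrow> nat" where
  "state_offset \<Sigma>s j = sum_list (map sdim (take j \<Sigma>s))"

definition diag_sub_block :: "real mat \<Rightarrow> nat \<Rightarrow> nat \<Rightarrow> real mat" where
  "diag_sub_block P off n = mat n n (\<lambda>(a,b). P $$ (off + a, off + b))"

definition ctrb_gramian :: "sys \<Rightarrow> real mat \<Rightarrow> bool" where
  "ctrb_gramian \<Sigma> P \<longleftrightarrow> P \<in> carrier_mat (sdim \<Sigma>) (sdim \<Sigma>) \<and>
     sys_A \<Sigma> * P + P * transpose_mat (sys_A \<Sigma>) + sys_B \<Sigma> * transpose_mat (sys_B \<Sigma>)
       = 0\<^sub>m (sdim \<Sigma>) (sdim \<Sigma>)"

definition available_storage :: "sys \<Rightarrow> real mat \<Rightarrow> bool" where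
  "available_storage \<Sigma> X \<longleftrightarrow> pd_mat (sdim \<Sigma>) X \<and> pr_lmi \<Sigma> (sdim \<Sigma>) (iodim \<Sigma>) X \<and>
     (\<forall>Y. pd_mat (sdim \<Sigma>) Y \<and> pr_lmi \<Sigma> (sdim \<Sigma>) (iodim \<Sigma>) Y \<longrightarrow> psd_mat (sdim \<Sigma>) (Y - X))"

definition cholesky_factor :: "nat \<Rightarrow> real mat \<Rightarrow> real mat \<Rightarrow> bool" where
  "cholesky_factor n X R \<longleftrightarrow> R \<in> carrier_mat n n \<and> upper_triangular R \<and>
     (\<forall>i<n. 0 < R $$ (i,i)) \<and> transpose_mat R * R = X"

definition orthonormal_mat :: "nat \<Rightarrow> real mat \<Rightarrow> bool" where
  "orthonormal_mat n U \<longleftrightarrow> U \<in> carrier_mat n n \<and> transpose_mat U * U = 1\<^sub>m n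
     \<and> U * transpose_mat U = 1\<^sub>m n"

definition sorted_pos_diag :: "nat \<Rightarrow> real mat \<Rightarrow> bool" where
  "sorted_pos_diag n G \<longleftrightarrow> G \<in> carrier_mat n n \<and> diagonal_mat G \<and>
     (\<forall>i<n. 0 < G $$ (i,i)) \<and> (\<forall>i j. i \<le> j \<and> j < n \<longrightarrow> G $$ (j,j) \<le> G $$ (i,i))"

definition diag_inv_sqrt :: "nat \<Rightarrow> real mat \<Rightarrow> real mat" where
  "diag_inv_sqrt n G = mat_diag n (\<lambda>i. 1 / sqrt (G $$ (i,i)))"

definition balancing_transform :: "nat \<Rightarrow> real mat \<Rightarrow> real mat \<Rightarrow> real mat \<Rightarrow> real mat \<Rightarrow> bool" where
  "balancing_transform n Xi Xo T Tinv \<longleftrightarrow> (\<exists>Ri Ro U G V.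
     cholesky_factor n Xi Ri \<and> cholesky_factor n Xo Ro \<and>
     orthonormal_mat n U \<and> orthonormal_mat n V \<and> sorted_pos_diag n G \<and>
     Ro * transpose_mat Ri = U * G * transpose_mat V \<and>
     T = diag_inv_sqrt n G * transpose_mat U * Ro \<and>
     Tinv = transpose_mat Ri * V * diag_inv_sqrt n G)"

definition truncate_balanced :: "nat \<Rightarrow> sys \<Rightarrow> real mat \<Rightarrow> real mat \<Rightarrow> sys" where
  "truncate_balanced r \<Sigma> T Tinv = (case \<Sigma> of (A,B,C,D) \<Rightarrow>
     (let At = T * A * Tinv; Bt = T * B; Ct = C * Tinv; p = dim_col B
      in (mat r r (\<lambda>(i,j). At $$ (i,j)), mat r p (\<lambda>(i,j). Bt $$ (i,j)),
          mat p r (\<lambda>(i,j). Ct $$ (i,j)), D)))"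

definition PIBT :: "sys list \<Rightarrow> real mat \<Rightarrow> real mat \<Rightarrow> nat list \<Rightarrow> sys list \<Rightarrow> sys \<Rightarrow> bool" where
  "PIBT \<Sigma>s S Bc rs \<Sigma>hs \<Sigma>hc \<longleftrightarrow>
     length rs = length \<Sigma>s \<and> length \<Sigma>hs = length \<Sigma>s \<and>
     (\<exists>Pc. ctrb_gramian (interconnect (parallel \<Sigma>s) S Bc) Pc \<and>
        (\<forall>j < length \<Sigma>s. \<exists>X T Tinv.
           available_storage (\<Sigma>s ! j) X \<and>
           balancing_transform (sdim (\<Sigma>s ! j))
             (diag_sub_block Pc (state_offset \<Sigma>s j) (sdim (\<Sigma>s ! j))) X T Tinv \<and>
           \<Sigma>hs ! j = truncate_balanced (rs ! j) (\<Sigma>s ! j) T Tinv)) \<and>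
     \<Sigma>hc = interconnect (parallel \<Sigma>hs) S Bc"

end

(* Passivity is certified by a storage X > 0 solving the positive real LMI, and the LMI says
   exactly that x^T X (A x + B v) <= v^T (C x + D v) for all states x and inputs v.
   A state transformation x = T^-1 x' turns a certificate X into T^-T X T^-1; for the balancing
   transformation of the subsystem with output Gramian X this is the diagonal matrix Gamma.
   With a diagonal certificate, the inequality for the truncated system is the inequality for
   the full one at states whose trailing coordinates vanish, so the leading block of Gamma
   certifies the reduced subsystem. Block diagonal certificates certify the parallel composition,
   and the feedback through S >= 0 only dissipates the additional power z^T S z, so the same
   certificate works for the reduced interconnected system. *)

theory Submission
  imports Defs
begin

lemma scalar_prod_transpose_mult_vec:
  fixes M :: "'a :: comm_semiring_0 mat"
  assumes "M \<in> carrier_mat nr nc" "x \<in> carrier_vec nc" "y \<in> carrier_vec nr"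
  shows "x \<bullet> (transpose_mat M *\<^sub>v y) = (M *\<^sub>v x) \<bullet> y"
  using assms transpose_vec_mult_scalar[OF assms] comm_scalar_prod[of x nc "transpose_mat M *\<^sub>v y"]
    comm_scalar_prod[of y nr "M *\<^sub>v x"] by auto

lemma scalar_prod_symmetric_mat:
  fixes X :: "'a :: comm_semiring_0 mat"
  assumes "X \<in> carrier_mat n n" "transpose_mat X = X" "x \<in> carrier_vec n" "y \<in> carrier_vec n"
  shows "x \<bullet> (X *\<^sub>v y) = y \<bullet> (X *\<^sub>v x)"
  using scalar_prod_transpose_mult_vec[OF assms(1,3,4)] comm_scalar_prod[of "X *\<^sub>v x" n y] assms
  by auto

lemma quadratic_form_congruence:
  fixes X :: "'a :: comm_ring mat"
  assumes "X \<in> carrier_mat n n" "P \<in> carrier_mat n n" "x \<in> carrier_vec n"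
  shows "x \<bullet> ((transpose_mat P * X * P) *\<^sub>v x) = (P *\<^sub>v x) \<bullet> (X *\<^sub>v (P *\<^sub>v x))"
proof -
  have "(transpose_mat P * X * P) *\<^sub>v x = transpose_mat P *\<^sub>v (X *\<^sub>v (P *\<^sub>v x))"
    using assms by (simp add: assoc_mult_mat_vec[of _ n n _ n])
  thus ?thesis using assms scalar_prod_transpose_mult_vec[of P n n x "X *\<^sub>v (P *\<^sub>v x)"] by auto
qed

lemma assoc_mult_mat_vec3:
  fixes A B C :: "'a :: comm_semiring_0 mat"
  assumes "A \<in> carrier_mat n1 n2" "B \<in> carrier_mat n2 n3" "C \<in> carrier_mat n3 n4" "x \<in> carrier_vec n4"
  shows "(A * B * C) *\<^sub>v x = A *\<^sub>v (B *\<^sub>v (C *\<^sub>v x))"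
  using assoc_mult_mat_vec[OF mult_carrier_mat[OF assms(1,2)] assms(3,4)]
    assoc_mult_mat_vec[OF assms(1,2) mult_mat_vec_carrier[OF assms(3,4)]] by simp

lemma assoc_mult_mat_vec4:
  fixes A B C E :: "'a :: comm_semiring_0 mat"
  assumes "A \<in> carrier_mat n1 n2" "B \<in> carrier_mat n2 n3" "C \<in> carrier_mat n3 n4"
    "E \<in> carrier_mat n4 n5" "x \<in> carrier_vec n5"
  shows "(A * B * C * E) *\<^sub>v x = A *\<^sub>v (B *\<^sub>v (C *\<^sub>v (E *\<^sub>v x)))"
  using assoc_mult_mat_vec[OF mult_carrier_mat[OF mult_carrier_mat[OF assms(1,2)] assms(3)] assms(4,5)]
    assoc_mult_mat_vec3[OF assms(1-3) mult_mat_vec_carrier[OF assms(4,5)]] by simp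

lemma invertible_inv_mat:
  fixes M :: "real mat"
  assumes "invertible_mat M" "M \<in> carrier_mat n n"
  shows "inv_mat n M \<in> carrier_mat n n" "M * inv_mat n M = 1\<^sub>m n" "inv_mat n M * M = 1\<^sub>m n"
proof -
  obtain N where N: "M * N = 1\<^sub>m n" "N * M = 1\<^sub>m (dim_row N)"
    using assms unfolding invertible_mat_def inverts_mat_def by auto
  have "dim_col N = n" using arg_cong[OF N(1), of dim_col] by simp
  moreover have "dim_row N = n" using arg_cong[OF N(2), of dim_col] assms(2) by simp
  ultimately have "\<exists>N. N \<in> carrier_mat n n \<and> M * N = 1\<^sub>m n \<and> N * M = 1\<^sub>m n" using N by auto
  from someI_ex[OF this]
  show "inv_mat n M \<in> carrier_mat n n" "M * inv_mat n M = 1\<^sub>m n" "inv_mat n M * M = 1\<^sub>m n"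
    unfolding inv_mat_def by auto
qed

lemma pd_mat_congruence:
  assumes X: "pd_mat n X" and T: "T \<in> carrier_mat n n" "Tinv \<in> carrier_mat n n" "T * Tinv = 1\<^sub>m n"
  shows "pd_mat n (transpose_mat Tinv * X * Tinv)"
  unfolding pd_mat_def
proof (intro conjI ballI impI)
  have Xc: "X \<in> carrier_mat n n" and Xt: "transpose_mat X = X" using X unfolding pd_mat_def by auto
  show "transpose_mat Tinv * X * Tinv \<in> carrier_mat n n" using Xc T by auto
  show "transpose_mat (transpose_mat Tinv * X * Tinv) = transpose_mat Tinv * X * Tinv"
    using Xc Xt T by (simp add: transpose_mult[of _ n n _ n] assoc_mult_mat[of _ n n _ n _ n])
  fix v :: "real vec" assume v: "v \<in> carrier_vec n" "v \<noteq> 0\<^sub>v n"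
  have "T *\<^sub>v (Tinv *\<^sub>v v) = v" using T v by (simp flip: assoc_mult_mat_vec)
  moreover have "T *\<^sub>v 0\<^sub>v n = 0\<^sub>v n" using T by (intro eq_vecI) auto
  ultimately have "Tinv *\<^sub>v v \<noteq> 0\<^sub>v n" using v by metis
  thus "0 < v \<bullet> ((transpose_mat Tinv * X * Tinv) *\<^sub>v v)"
    using X T v unfolding quadratic_form_congruence[OF Xc T(2) v(1)] pd_mat_def by auto
qed

lemma mat_diag_cong: "(\<And>i. i < n \<Longrightarrow> f i = f' i) \<Longrightarrow> mat_diag n f = mat_diag n f'"
  unfolding mat_diag_def by (intro eq_matI) auto

lemma diagonal_mat_mult_vec_index:
  fixes G :: "'a :: comm_semiring_0 mat"
  assumes "G \<in> carrier_mat n n" "diagonal_mat G" "w \<in> carrier_vec n" "i < n"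
  shows "(G *\<^sub>v w) $ i = G $$ (i, i) * w $ i"
proof -
  have "(G *\<^sub>v w) $ i = (\<Sum>j\<in>{0..<n}. G $$ (i, j) * w $ j)"
    using assms by (simp add: scalar_prod_def)
  also have "\<dots> = (\<Sum>j\<in>{0..<n}. if j = i then G $$ (i, i) * w $ i else 0)"
    using assms unfolding diagonal_mat_def by (intro sum.cong) auto
  finally show ?thesis using assms by simp
qed

lemma diagonal_mat_transpose:
  assumes "G \<in> carrier_mat n n" "diagonal_mat G"
  shows "transpose_mat G = G"
  using assms unfolding diagonal_mat_def by (intro eq_matI) (auto, metis)

definition leading_block :: "nat \<Rightarrow> nat \<Rightarrow> 'a mat \<Rightarrow> 'a mat" where
  "leading_block k r M = mat k r (\<lambda>(i, j). M $$ (i, j))"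

lemma append_zero_carrier_vec: "x \<in> carrier_vec r \<Longrightarrow> r \<le> n \<Longrightarrow> x @\<^sub>v 0\<^sub>v (n - r) \<in> carrier_vec n"
  using append_carrier_vec[of x r "0\<^sub>v (n - r)" "n - r"] by simp

lemma scalar_prod_vec_first:
  fixes x :: "'a :: comm_semiring_0 vec"
  assumes "x \<in> carrier_vec r" "w \<in> carrier_vec n" "r \<le> n"
  shows "x \<bullet> vec_first w r = (x @\<^sub>v 0\<^sub>v (n - r)) \<bullet> w"
proof -
  have "w = vec_first w r @\<^sub>v vec_last w (n - r)"
    using assms by (simp add: vec_first_last_append[of w r "n - r"])
  hence "(x @\<^sub>v 0\<^sub>v (n - r)) \<bullet> w = x \<bullet> vec_first w r + 0\<^sub>v (n - r) \<bullet> vec_last w (n - r)"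
    using assms by (metis scalar_prod_append vec_first_carrier vec_last_carrier zero_carrier_vec)
  thus ?thesis by simp
qed

lemma leading_block_mult_vec:
  fixes M :: "'a :: comm_semiring_0 mat"
  assumes M: "M \<in> carrier_mat nr nc" and dims: "k \<le> nr" "r \<le> nc" and x: "x \<in> carrier_vec r"
  shows "leading_block k r M *\<^sub>v x = vec_first (M *\<^sub>v (x @\<^sub>v 0\<^sub>v (nc - r))) k"
proof (rule eq_vecI)
  fix i assume "i < dim_vec (vec_first (M *\<^sub>v (x @\<^sub>v 0\<^sub>v (nc - r))) k)"
  hence i: "i < k" by simp
  have "row (leading_block k r M) i = vec_first (row M i) r"
    using M dims i by (intro eq_vecI) (auto simp: leading_block_def vec_first_def)
  hence "(leading_block k r M *\<^sub>v x) $ i = x \<bullet> vec_first (row M i) r"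
    using i x by (simp add: leading_block_def comm_scalar_prod[of _ r x])
  also have "\<dots> = (x @\<^sub>v 0\<^sub>v (nc - r)) \<bullet> row M i"
    using M dims x by (intro scalar_prod_vec_first) auto
  also have "\<dots> = vec_first (M *\<^sub>v (x @\<^sub>v 0\<^sub>v (nc - r))) k $ i"
  proof -
    have "x @\<^sub>v 0\<^sub>v (nc - r) \<in> carrier_vec nc" "row M i \<in> carrier_vec nc"
      using M dims i append_zero_carrier_vec[OF x dims(2)] by auto
    thus ?thesis using M dims i by (simp add: vec_first_def comm_scalar_prod[of _ nc])
  qed
  finally show "(leading_block k r M *\<^sub>v x) $ i = vec_first (M *\<^sub>v (x @\<^sub>v 0\<^sub>v (nc - r))) k $ i" .
qed (simp add: leading_block_def)

lemma diagonal_mat_leading_block: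
  assumes "G \<in> carrier_mat n n" "diagonal_mat G" "r \<le> n"
  shows "diagonal_mat (leading_block r r G)"
  using assms unfolding diagonal_mat_def leading_block_def by auto

lemma leading_block_diagonal_mult_vec:
  fixes G :: "'a :: comm_semiring_0 mat"
  assumes G: "G \<in> carrier_mat n n" "diagonal_mat G" and r: "r \<le> n" and w: "w \<in> carrier_vec n"
  shows "leading_block r r G *\<^sub>v vec_first w r = vec_first (G *\<^sub>v w) r"
proof (rule eq_vecI)
  fix i assume "i < dim_vec (vec_first (G *\<^sub>v w) r)"
  hence i: "i < r" by simp
  have "leading_block r r G \<in> carrier_mat r r" by (simp add: leading_block_def)
  thus "(leading_block r r G *\<^sub>v vec_first w r) $ i = vec_first (G *\<^sub>v w) r $ i"
    using diagonal_mat_mult_vec_index[OF _ diagonal_mat_leading_block[OF G r] _ i]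
      diagonal_mat_mult_vec_index[OF G w] i r
    by (simp add: leading_block_def vec_first_def)
qed (simp add: leading_block_def)

lemma pd_mat_leading_block:
  assumes G: "pd_mat n G" and r: "r \<le> n"
  shows "pd_mat r (leading_block r r G)"
  unfolding pd_mat_def
proof (intro conjI ballI impI)
  have Gc: "G \<in> carrier_mat n n" and Gt: "transpose_mat G = G" using G unfolding pd_mat_def by auto
  show "leading_block r r G \<in> carrier_mat r r" by (simp add: leading_block_def)
  show "transpose_mat (leading_block r r G) = leading_block r r G"
  proof (rule eq_matI)
    fix i j assume "i < dim_row (leading_block r r G)" "j < dim_col (leading_block r r G)"
    hence "i < n" "j < n" using r by (auto simp: leading_block_def)
    hence "G $$ (j, i) = G $$ (i, j)" using Gc by (metis Gt carrier_matD index_transpose_mat(1))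
    thus "transpose_mat (leading_block r r G) $$ (i, j) = leading_block r r G $$ (i, j)"
      using \<open>i < dim_row _\<close> \<open>j < dim_col _\<close> by (simp add: leading_block_def)
  qed (simp_all add: leading_block_def)
  fix v :: "real vec" assume v: "v \<in> carrier_vec r" "v \<noteq> 0\<^sub>v r"
  have "v @\<^sub>v 0\<^sub>v (n - r) \<noteq> 0\<^sub>v r @\<^sub>v 0\<^sub>v (n - r)" using v by simp
  moreover have "0\<^sub>v r @\<^sub>v 0\<^sub>v (n - r) = (0\<^sub>v n :: real vec)" using r by (intro eq_vecI) auto
  moreover note vc = append_zero_carrier_vec[OF v(1) r]
  ultimately have "0 < (v @\<^sub>v 0\<^sub>v (n - r)) \<bullet> (G *\<^sub>v (v @\<^sub>v 0\<^sub>v (n - r)))"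
    using G unfolding pd_mat_def by auto
  also have "\<dots> = v \<bullet> (leading_block r r G *\<^sub>v v)"
    using Gc leading_block_mult_vec[OF Gc r r v(1)]
      scalar_prod_vec_first[OF v(1) mult_mat_vec_carrier[OF Gc vc] r] by simp
  finally show "0 < v \<bullet> (leading_block r r G *\<^sub>v v)" .
qed

definition block_diag :: "'a :: zero mat \<Rightarrow> 'a mat \<Rightarrow> 'a mat" where
  "block_diag A B = four_block_mat A (0\<^sub>m (dim_row A) (dim_col B)) (0\<^sub>m (dim_row B) (dim_col A)) B"

lemma block_diag_carrier:
  "A \<in> carrier_mat n1 m1 \<Longrightarrow> B \<in> carrier_mat n2 m2 \<Longrightarrow> block_diag A B \<in> carrier_mat (n1 + n2) (m1 + m2)"
  unfolding block_diag_def by auto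

lemma block_diag_mult_vec:
  fixes A B :: "'a :: semiring_0 mat"
  assumes "A \<in> carrier_mat n1 m1" "B \<in> carrier_mat n2 m2" "x \<in> carrier_vec m1" "y \<in> carrier_vec m2"
  shows "block_diag A B *\<^sub>v (x @\<^sub>v y) = (A *\<^sub>v x) @\<^sub>v (B *\<^sub>v y)"
proof -
  have "0\<^sub>m n1 m2 *\<^sub>v y = 0\<^sub>v n1" "0\<^sub>m n2 m1 *\<^sub>v x = 0\<^sub>v n2"
    using assms by (auto intro!: eq_vecI simp: scalar_prod_def)
  thus ?thesis
    using assms unfolding block_diag_def by (simp add: four_block_mat_mult_vec[of _ n1 m1 _ m2 _ n2])
qed

lemma pd_mat_nonneg:
  assumes "pd_mat n X" "x \<in> carrier_vec n"
  shows "0 \<le> x \<bullet> (X *\<^sub>v x)"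
proof (cases "x = 0\<^sub>v n")
  case True
  have "X *\<^sub>v x \<in> carrier_vec n" using assms unfolding pd_mat_def by auto
  thus ?thesis unfolding True by simp
next
  case False
  thus ?thesis using assms unfolding pd_mat_def by (simp add: less_imp_le)
qed

lemma pd_mat_block_diag:
  assumes X1: "pd_mat n1 X1" and X2: "pd_mat n2 X2"
  shows "pd_mat (n1 + n2) (block_diag X1 X2)"
  unfolding pd_mat_def
proof (intro conjI ballI impI)
  have X1c: "X1 \<in> carrier_mat n1 n1" and X1t: "transpose_mat X1 = X1"
    and X2c: "X2 \<in> carrier_mat n2 n2" and X2t: "transpose_mat X2 = X2"
    using X1 X2 unfolding pd_mat_def by auto
  show "block_diag X1 X2 \<in> carrier_mat (n1 + n2) (n1 + n2)" by (rule block_diag_carrier[OF X1c X2c])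
  show "transpose_mat (block_diag X1 X2) = block_diag X1 X2"
    using X1c X2c X1t X2t unfolding block_diag_def
    by (simp add: transpose_four_block_mat[of _ n1 n1 _ n2 _ n2])
  fix w :: "real vec" assume w: "w \<in> carrier_vec (n1 + n2)" "w \<noteq> 0\<^sub>v (n1 + n2)"
  define x1 where "x1 = vec_first w n1"
  define x2 where "x2 = vec_last w n2"
  have x: "x1 \<in> carrier_vec n1" "x2 \<in> carrier_vec n2" and w_eq: "w = x1 @\<^sub>v x2"
    using w unfolding x1_def x2_def by auto
  have "0\<^sub>v n1 @\<^sub>v 0\<^sub>v n2 = (0\<^sub>v (n1 + n2) :: real vec)" by (intro eq_vecI) auto
  hence "x1 \<noteq> 0\<^sub>v n1 \<or> x2 \<noteq> 0\<^sub>v n2" using w w_eq by auto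
  moreover have "0 \<le> x1 \<bullet> (X1 *\<^sub>v x1)" "0 \<le> x2 \<bullet> (X2 *\<^sub>v x2)"
    using pd_mat_nonneg X1 X2 x by auto
  ultimately have "0 < x1 \<bullet> (X1 *\<^sub>v x1) + x2 \<bullet> (X2 *\<^sub>v x2)"
    using X1 X2 x unfolding pd_mat_def by fastforce
  thus "0 < w \<bullet> (block_diag X1 X2 *\<^sub>v w)"
    unfolding w_eq using X1c X2c x by (simp add: block_diag_mult_vec scalar_prod_append)
qed

section \<open>The positive real LMI as a dissipation inequality\<close>

lemma sys_components [simp]:
  "sys_A (A, B, C, D) = A" "sys_B (A, B, C, D) = B" "sys_C (A, B, C, D) = C" "sys_D (A, B, C, D) = D"
  by (simp_all add: sys_A_def sys_B_def sys_C_def sys_D_def)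

lemma sys_wfD:
  assumes "sys_wf \<Sigma> n p"
  shows "sys_A \<Sigma> \<in> carrier_mat n n" "sys_B \<Sigma> \<in> carrier_mat n p"
    "sys_C \<Sigma> \<in> carrier_mat p n" "sys_D \<Sigma> \<in> carrier_mat p p"
    "sdim \<Sigma> = n" "iodim \<Sigma> = p"
  using assms unfolding sys_wf_def sdim_def iodim_def by auto

lemma is_passiveI: "sys_wf \<Sigma> n p \<Longrightarrow> pd_mat n X \<Longrightarrow> pr_lmi \<Sigma> n p X \<Longrightarrow> is_passive \<Sigma>"
  unfolding is_passive_def by blast

lemma is_passiveE:
  assumes "is_passive \<Sigma>"
  obtains X where "sys_wf \<Sigma> (sdim \<Sigma>) (iodim \<Sigma>)" "pd_mat (sdim \<Sigma>) X"
    "pr_lmi \<Sigma> (sdim \<Sigma>) (iodim \<Sigma>) X"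
  using assms sys_wfD(5,6) unfolding is_passive_def by metis

(* The derivative of the storage x^T X x / 2 along the system minus the supplied power v^T y:
   the positive real LMI says that it is never positive. *)
definition passivity_form :: "sys \<Rightarrow> real mat \<Rightarrow> real vec \<Rightarrow> real vec \<Rightarrow> real" where
  "passivity_form \<Sigma> X x v = x \<bullet> (X *\<^sub>v (sys_A \<Sigma> *\<^sub>v x + sys_B \<Sigma> *\<^sub>v v))
      - v \<bullet> (sys_C \<Sigma> *\<^sub>v x + sys_D \<Sigma> *\<^sub>v v)"

lemma pr_lmi_mat_carrier_symmetric:
  assumes wf: "sys_wf \<Sigma> n p" and X: "X \<in> carrier_mat n n" "transpose_mat X = X"
  shows "pr_lmi_mat \<Sigma> X \<in> carrier_mat (n + p) (n + p)"
    "transpose_mat (pr_lmi_mat \<Sigma> X) = pr_lmi_mat \<Sigma> X"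
proof -
  obtain A B C D where \<Sigma>: "\<Sigma> = (A, B, C, D)" by (cases \<Sigma>)
  have A: "A \<in> carrier_mat n n" and B: "B \<in> carrier_mat n p" and C: "C \<in> carrier_mat p n"
    and D: "D \<in> carrier_mat p p" using sys_wfD[OF wf] by (auto simp: \<Sigma>)
  have blocks: "transpose_mat A * X + X * A \<in> carrier_mat n n" "X * B - transpose_mat C \<in> carrier_mat n p"
    "transpose_mat B * X - C \<in> carrier_mat p n" "- (D + transpose_mat D) \<in> carrier_mat p p"
    using A B C D X by auto
  show "pr_lmi_mat \<Sigma> X \<in> carrier_mat (n + p) (n + p)"
    unfolding pr_lmi_mat_def \<Sigma> using four_block_carrier_mat[OF blocks(1,4)] by simp
  have "transpose_mat (transpose_mat A * X + X * A) = transpose_mat A * X + X * A"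
    using A X by (simp add: transpose_add[of _ n n] transpose_mult[of _ n n] comm_add_mat[of _ n n])
  moreover have "transpose_mat (transpose_mat B * X - C) = X * B - transpose_mat C"
    using B C X by (simp add: transpose_minus[of _ p n] transpose_mult[of _ p n])
  moreover have "transpose_mat (X * B - transpose_mat C) = transpose_mat B * X - C"
    using B C X by (simp add: transpose_minus[of _ n p] transpose_mult[of _ n n])
  moreover have "transpose_mat (- (D + transpose_mat D)) = - (D + transpose_mat D)"
    using D by (simp add: transpose_uminus transpose_add[of _ p p] comm_add_mat[of _ p p])
  ultimately show "transpose_mat (pr_lmi_mat \<Sigma> X) = pr_lmi_mat \<Sigma> X"
    unfolding pr_lmi_mat_def \<Sigma> by (simp add: transpose_four_block_mat[OF blocks])
qed

lemma pr_lmi_mat_quadratic_form: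
  assumes wf: "sys_wf \<Sigma> n p" and X: "X \<in> carrier_mat n n" "transpose_mat X = X"
    and x: "x \<in> carrier_vec n" and v: "v \<in> carrier_vec p"
  shows "(x @\<^sub>v v) \<bullet> (pr_lmi_mat \<Sigma> X *\<^sub>v (x @\<^sub>v v)) = 2 * passivity_form \<Sigma> X x v"
proof -
  obtain A B C D where \<Sigma>: "\<Sigma> = (A, B, C, D)" by (cases \<Sigma>)
  have A: "A \<in> carrier_mat n n" and B: "B \<in> carrier_mat n p" and C: "C \<in> carrier_mat p n"
    and D: "D \<in> carrier_mat p p" using sys_wfD[OF wf] by (auto simp: \<Sigma>)
  have blocks: "transpose_mat A * X + X * A \<in> carrier_mat n n" "X * B - transpose_mat C \<in> carrier_mat n p"
    "transpose_mat B * X - C \<in> carrier_mat p n" "- (D + transpose_mat D) \<in> carrier_mat p p"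
    using A B C D X by auto
  have "(x @\<^sub>v v) \<bullet> (pr_lmi_mat \<Sigma> X *\<^sub>v (x @\<^sub>v v)) =
     x \<bullet> ((transpose_mat A * X + X * A) *\<^sub>v x) + x \<bullet> ((X * B - transpose_mat C) *\<^sub>v v) +
     (v \<bullet> ((transpose_mat B * X - C) *\<^sub>v x) + v \<bullet> ((- (D + transpose_mat D)) *\<^sub>v v))"
    unfolding pr_lmi_mat_def \<Sigma> using blocks x v
    by (simp add: four_block_mat_mult_vec[OF blocks x v] scalar_prod_append[of x n v p]
        scalar_prod_add_distrib[of _ n] scalar_prod_add_distrib[of _ p])
  also have "x \<bullet> ((transpose_mat A * X + X * A) *\<^sub>v x) = 2 * (x \<bullet> (X *\<^sub>v (A *\<^sub>v x)))"
    using A X x scalar_prod_transpose_mult_vec[OF A x, of "X *\<^sub>v x"]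
      scalar_prod_symmetric_mat[OF X x, of "A *\<^sub>v x"]
    by (simp add: add_mult_distrib_mat_vec[of _ n n] scalar_prod_add_distrib[of _ n])
  also have "x \<bullet> ((X * B - transpose_mat C) *\<^sub>v v) = x \<bullet> (X *\<^sub>v (B *\<^sub>v v)) - v \<bullet> (C *\<^sub>v x)"
    using B C X x v scalar_prod_transpose_mult_vec[OF C x v] comm_scalar_prod[of "C *\<^sub>v x" p v]
    by (simp add: minus_mult_distrib_mat_vec[of _ n p] scalar_prod_minus_distrib[of _ n])
  also have "v \<bullet> ((transpose_mat B * X - C) *\<^sub>v x) = x \<bullet> (X *\<^sub>v (B *\<^sub>v v)) - v \<bullet> (C *\<^sub>v x)"
    using B C X x v scalar_prod_transpose_mult_vec[OF B v, of "X *\<^sub>v x"]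
      scalar_prod_symmetric_mat[OF X x, of "B *\<^sub>v v"]
    by (simp add: minus_mult_distrib_mat_vec[of _ p n] scalar_prod_minus_distrib[of _ p])
  also have "v \<bullet> ((- (D + transpose_mat D)) *\<^sub>v v) = - 2 * (v \<bullet> (D *\<^sub>v v))"
    using D v scalar_prod_transpose_mult_vec[OF D v v] comm_scalar_prod[of "D *\<^sub>v v" p v]
    by (simp add: add_mult_distrib_mat_vec[of _ p p] scalar_prod_add_distrib[of _ p])
  finally show ?thesis
    unfolding passivity_form_def \<Sigma> using A B C D X x v
    by (simp add: mult_add_distrib_mat_vec[of _ n] scalar_prod_add_distrib[of _ n]
        scalar_prod_add_distrib[of _ p])
qed

lemma pr_lmi_iff_passivity_form:
  assumes wf: "sys_wf \<Sigma> n p" and X: "X \<in> carrier_mat n n" "transpose_mat X = X"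
  shows "pr_lmi \<Sigma> n p X \<longleftrightarrow> (\<forall>x\<in>carrier_vec n. \<forall>v\<in>carrier_vec p. passivity_form \<Sigma> X x v \<le> 0)"
proof -
  note M = pr_lmi_mat_carrier_symmetric[OF wf X]
  have "pr_lmi \<Sigma> n p X \<longleftrightarrow> (\<forall>w\<in>carrier_vec (n + p). w \<bullet> (pr_lmi_mat \<Sigma> X *\<^sub>v w) \<le> 0)"
    unfolding pr_lmi_def psd_mat_def using M by (auto simp: transpose_uminus)
  also have "\<dots> \<longleftrightarrow> (\<forall>x\<in>carrier_vec n. \<forall>v\<in>carrier_vec p. passivity_form \<Sigma> X x v \<le> 0)"
    unfolding all_vec_append using pr_lmi_mat_quadratic_form[OF wf X] by auto
  finally show ?thesis .
qed

section \<open>Balanced truncation\<close>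

definition state_transform :: "real mat \<Rightarrow> real mat \<Rightarrow> sys \<Rightarrow> sys" where
  "state_transform T Tinv \<Sigma> = (case \<Sigma> of (A, B, C, D) \<Rightarrow> (T * A * Tinv, T * B, C * Tinv, D))"

lemma sys_wf_state_transform:
  assumes "sys_wf \<Sigma> n p" "T \<in> carrier_mat n n" "Tinv \<in> carrier_mat n n"
  shows "sys_wf (state_transform T Tinv \<Sigma>) n p"
  using assms sys_wfD[OF assms(1)] unfolding sys_wf_def state_transform_def
  by (cases \<Sigma>) auto

lemma passivity_form_state_transform:
  assumes wf: "sys_wf \<Sigma> n p" and X: "X \<in> carrier_mat n n"
    and T: "T \<in> carrier_mat n n" "Tinv \<in> carrier_mat n n" "Tinv * T = 1\<^sub>m n"
    and x: "x \<in> carrier_vec n" and v: "v \<in> carrier_vec p"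
  shows "passivity_form (state_transform T Tinv \<Sigma>) (transpose_mat Tinv * X * Tinv) x v
    = passivity_form \<Sigma> X (Tinv *\<^sub>v x) v"
proof -
  obtain A B C D where \<Sigma>: "\<Sigma> = (A, B, C, D)" by (cases \<Sigma>)
  have A: "A \<in> carrier_mat n n" and B: "B \<in> carrier_mat n p" and C: "C \<in> carrier_mat p n"
    using sys_wfD[OF wf] by (auto simp: \<Sigma>)
  define w where "w = A *\<^sub>v (Tinv *\<^sub>v x) + B *\<^sub>v v"
  have w: "w \<in> carrier_vec n" unfolding w_def using A B T x v by auto
  have "(T * A * Tinv) *\<^sub>v x + (T * B) *\<^sub>v v = T *\<^sub>v w"
    unfolding w_def using A B T x v
    by (simp add: mult_add_distrib_mat_vec[of T n n] assoc_mult_mat_vec[of _ n n _ n])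
  moreover have "(transpose_mat Tinv * X * Tinv) *\<^sub>v (T *\<^sub>v w) = transpose_mat Tinv *\<^sub>v (X *\<^sub>v w)"
  proof -
    have "(transpose_mat Tinv * X * Tinv) *\<^sub>v (T *\<^sub>v w) = (transpose_mat Tinv * X * Tinv * T) *\<^sub>v w"
      using X T w by (simp add: assoc_mult_mat_vec[of _ n n _ n])
    also have "transpose_mat Tinv * X * Tinv * T = transpose_mat Tinv * X"
      using X T by (simp add: assoc_mult_mat[of _ n n _ n _ n])
    finally show ?thesis using X T w by simp
  qed
  moreover have "x \<bullet> (transpose_mat Tinv *\<^sub>v (X *\<^sub>v w)) = (Tinv *\<^sub>v x) \<bullet> (X *\<^sub>v w)"
    using scalar_prod_transpose_mult_vec[OF T(2) x, of "X *\<^sub>v w"] X w by simp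
  ultimately show ?thesis
    unfolding passivity_form_def state_transform_def \<Sigma> w_def using C T x by simp
qed

lemma pr_lmi_state_transform:
  assumes wf: "sys_wf \<Sigma> n p" and X: "X \<in> carrier_mat n n" "transpose_mat X = X"
    and T: "T \<in> carrier_mat n n" "Tinv \<in> carrier_mat n n" "Tinv * T = 1\<^sub>m n"
    and lmi: "pr_lmi \<Sigma> n p X"
  shows "pr_lmi (state_transform T Tinv \<Sigma>) n p (transpose_mat Tinv * X * Tinv)"
proof -
  have X': "transpose_mat Tinv * X * Tinv \<in> carrier_mat n n"
    "transpose_mat (transpose_mat Tinv * X * Tinv) = transpose_mat Tinv * X * Tinv"
    using X T by (auto simp: transpose_mult[of _ n n _ n] assoc_mult_mat[of _ n n _ n _ n])
  show ?thesis
    unfolding pr_lmi_iff_passivity_form[OF sys_wf_state_transform[OF wf T(1,2)] X']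
    using lmi T(2) passivity_form_state_transform[OF wf X(1) T]
    by (simp add: pr_lmi_iff_passivity_form[OF wf X])
qed

definition truncate_states :: "nat \<Rightarrow> sys \<Rightarrow> sys" where
  "truncate_states r \<Sigma> = (case \<Sigma> of (A, B, C, D) \<Rightarrow>
     (leading_block r r A, leading_block r (dim_col B) B, leading_block (dim_col B) r C, D))"

lemma truncate_balanced_eq:
  "truncate_balanced r \<Sigma> T Tinv = truncate_states r (state_transform T Tinv \<Sigma>)"
  by (cases \<Sigma>) (simp add: truncate_balanced_def truncate_states_def state_transform_def
      leading_block_def Let_def)

lemma sys_wf_truncate_states:
  assumes "sys_wf \<Sigma> n p"
  shows "sys_wf (truncate_states r \<Sigma>) r p"
  using sys_wfD[OF assms] unfolding sys_wf_def truncate_states_def leading_block_def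
  by (cases \<Sigma>) auto

lemma passivity_form_truncate_states:
  assumes wf: "sys_wf \<Sigma> n p" and G: "G \<in> carrier_mat n n" "diagonal_mat G" and r: "r \<le> n"
    and x: "x \<in> carrier_vec r" and v: "v \<in> carrier_vec p"
  shows "passivity_form (truncate_states r \<Sigma>) (leading_block r r G) x v
    = passivity_form \<Sigma> G (x @\<^sub>v 0\<^sub>v (n - r)) v"
proof -
  obtain A B C D where \<Sigma>: "\<Sigma> = (A, B, C, D)" by (cases \<Sigma>)
  have A: "A \<in> carrier_mat n n" and B: "B \<in> carrier_mat n p" and C: "C \<in> carrier_mat p n"
    and D: "D \<in> carrier_mat p p" using sys_wfD[OF wf] by (auto simp: \<Sigma>)
  define y where "y = x @\<^sub>v 0\<^sub>v (n - r)"
  define w where "w = A *\<^sub>v y + B *\<^sub>v v"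
  have y: "y \<in> carrier_vec n" unfolding y_def using append_zero_carrier_vec[OF x r] .
  have w: "w \<in> carrier_vec n" unfolding w_def using A B y v by auto
  have "v @\<^sub>v 0\<^sub>v (p - p) = v" using v by (intro eq_vecI) auto
  hence "leading_block r r A *\<^sub>v x + leading_block r p B *\<^sub>v v = vec_first w r"
    unfolding w_def y_def using A B r x v
    by (simp add: leading_block_mult_vec[OF A r r x] leading_block_mult_vec[OF B r order.refl v])
      (intro eq_vecI, auto simp: vec_first_def)
  hence "x \<bullet> (leading_block r r G *\<^sub>v (leading_block r r A *\<^sub>v x + leading_block r p B *\<^sub>v v))
      = y \<bullet> (G *\<^sub>v w)"
    unfolding y_def
    using leading_block_diagonal_mult_vec[OF G r w] scalar_prod_vec_first[OF x _ r] G w by simp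
  moreover have "leading_block p r C *\<^sub>v x = C *\<^sub>v y"
    unfolding y_def using leading_block_mult_vec[OF C order.refl r x] C
    by (intro eq_vecI) (auto simp: vec_first_def)
  moreover have "dim_col B = p" using B by simp
  ultimately show ?thesis
    unfolding passivity_form_def truncate_states_def \<Sigma> w_def y_def by simp
qed

lemma pr_lmi_truncate_states:
  assumes wf: "sys_wf \<Sigma> n p" and G: "G \<in> carrier_mat n n" "diagonal_mat G" and r: "r \<le> n"
    and lmi: "pr_lmi \<Sigma> n p G"
  shows "pr_lmi (truncate_states r \<Sigma>) r p (leading_block r r G)"
proof -
  have Gr: "leading_block r r G \<in> carrier_mat r r" "diagonal_mat (leading_block r r G)"
    using diagonal_mat_leading_block[OF G r] by (auto simp: leading_block_def)
  show ?thesis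
    using lmi append_zero_carrier_vec[OF _ r] passivity_form_truncate_states[OF wf G r]
    unfolding pr_lmi_iff_passivity_form[OF sys_wf_truncate_states[OF wf] Gr(1)
        diagonal_mat_transpose[OF Gr]]
      pr_lmi_iff_passivity_form[OF wf G(1) diagonal_mat_transpose[OF G]]
    by auto
qed

lemma diag_inv_sqrt_scaling:
  assumes G: "sorted_pos_diag n G"
  defines "H \<equiv> diag_inv_sqrt n G"
  shows "H \<in> carrier_mat n n" "transpose_mat H = H" "H * (G * H) = 1\<^sub>m n" "H * (G * (G * H)) = G"
proof -
  define g where "g i = G $$ (i, i)" for i
  have Gc: "G \<in> carrier_mat n n" and G_diag: "diagonal_mat G" and g_pos: "\<And>i. i < n \<Longrightarrow> 0 < g i"
    using G unfolding sorted_pos_diag_def g_def by auto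
  have G_eq: "G = mat_diag n g"
    using G_diag carrier_matD[OF Gc] unfolding diagonal_mat_def mat_diag_def g_def
    by (intro eq_matI) auto
  have H_eq: "H = mat_diag n (\<lambda>i. 1 / sqrt (g i))" unfolding H_def diag_inv_sqrt_def g_def ..
  show "H \<in> carrier_mat n n" "transpose_mat H = H" unfolding H_eq mat_diag_def by auto
  show "H * (G * H) = 1\<^sub>m n"
    unfolding H_eq G_eq using g_pos by (simp flip: mat_diag_one) (intro mat_diag_cong, force)
  show "H * (G * (G * H)) = G"
    unfolding H_eq G_eq using g_pos by simp (intro mat_diag_cong, force)
qed

lemma balancing_transformD:
  assumes "balancing_transform n Xi Xo T Tinv"
  shows "T \<in> carrier_mat n n" "Tinv \<in> carrier_mat n n" "T * Tinv = 1\<^sub>m n" "Tinv * T = 1\<^sub>m n"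
    "diagonal_mat (transpose_mat Tinv * Xo * Tinv)"
proof -
  obtain Ri Ro U G V where Ri: "cholesky_factor n Xi Ri" and Ro: "cholesky_factor n Xo Ro"
    and U: "orthonormal_mat n U" and V: "orthonormal_mat n V" and G: "sorted_pos_diag n G"
    and svd: "Ro * transpose_mat Ri = U * G * transpose_mat V"
    and T_def: "T = diag_inv_sqrt n G * transpose_mat U * Ro"
    and Tinv_def: "Tinv = transpose_mat Ri * V * diag_inv_sqrt n G"
    using assms unfolding balancing_transform_def by blast
  define H where "H = diag_inv_sqrt n G"
  note H = diag_inv_sqrt_scaling[OF G, folded H_def]
  have [simp]: "Ri \<in> carrier_mat n n" "Ro \<in> carrier_mat n n" and Xo: "Xo = transpose_mat Ro * Ro"
    using Ri Ro unfolding cholesky_factor_def by auto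
  have [simp]: "U \<in> carrier_mat n n" "V \<in> carrier_mat n n"
    and UU: "transpose_mat U * U = 1\<^sub>m n" and VV: "transpose_mat V * V = 1\<^sub>m n"
    using U V unfolding orthonormal_mat_def by auto
  have [simp]: "G \<in> carrier_mat n n" "H \<in> carrier_mat n n" and G_diag: "diagonal_mat G"
    using G H unfolding sorted_pos_diag_def by auto
  have mult_carrier [simp]: "A * B \<in> carrier_mat n n"
    if "A \<in> carrier_mat n n" "B \<in> carrier_mat n n" for A B :: "real mat" using that by auto
  note assoc [simp] = assoc_mult_mat[of _ n n _ n _ n]
    left_mult_one_mat[of _ n n] right_mult_one_mat[of _ n n]
  have UU': "transpose_mat U * (U * M) = M" and VV': "transpose_mat V * (V * M) = M"
    if "M \<in> carrier_mat n n" for M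
    using that by (simp_all flip: assoc add: UU VV)
  show T: "T \<in> carrier_mat n n" and Tinv: "Tinv \<in> carrier_mat n n"
    unfolding T_def Tinv_def H_def[symmetric] by simp_all
  have "T * Tinv = H * (transpose_mat U * (Ro * transpose_mat Ri) * V) * H"
    unfolding T_def Tinv_def H_def[symmetric] by simp
  also have "\<dots> = 1\<^sub>m n" unfolding svd using UU' VV' H(3) by simp
  finally show TTinv: "T * Tinv = 1\<^sub>m n" .
  show "Tinv * T = 1\<^sub>m n" by (rule mat_mult_left_right_inverse[OF T Tinv TTinv])
  have RoTinv: "Ro * Tinv = U * (G * H)"
  proof -
    have "Ro * Tinv = (Ro * transpose_mat Ri) * V * H" unfolding Tinv_def H_def[symmetric] by simp
    thus ?thesis unfolding svd using VV' by simp
  qed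
  have "transpose_mat Tinv * Xo * Tinv = transpose_mat (Ro * Tinv) * (Ro * Tinv)"
    unfolding Xo using Tinv by (simp add: transpose_mult[of _ n n _ n])
  also have "\<dots> = G"
    unfolding RoTinv using UU' H(2,4) diagonal_mat_transpose[OF _ G_diag, of n]
    by (simp add: transpose_mult[of _ n n _ n])
  finally show "diagonal_mat (transpose_mat Tinv * Xo * Tinv)" using G_diag by simp
qed

lemma is_passive_truncate_balanced:
  assumes wf: "sys_wf \<Sigma> n p" and X: "pd_mat n X" "pr_lmi \<Sigma> n p X"
    and bal: "balancing_transform n Xi X T Tinv" and r: "r \<le> n"
  shows "is_passive (truncate_balanced r \<Sigma> T Tinv)"
proof -
  note T = balancing_transformD[OF bal]
  let ?G = "transpose_mat Tinv * X * Tinv"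
  have Xc: "X \<in> carrier_mat n n" "transpose_mat X = X" using X(1) unfolding pd_mat_def by auto
  have G: "pd_mat n ?G" by (rule pd_mat_congruence[OF X(1) T(1-3)])
  hence Gc: "?G \<in> carrier_mat n n" unfolding pd_mat_def by simp
  have wf': "sys_wf (state_transform T Tinv \<Sigma>) n p" by (rule sys_wf_state_transform[OF wf T(1,2)])
  have "pr_lmi (state_transform T Tinv \<Sigma>) n p ?G"
    by (rule pr_lmi_state_transform[OF wf Xc T(1,2,4) X(2)])
  hence "pr_lmi (truncate_states r (state_transform T Tinv \<Sigma>)) r p (leading_block r r ?G)"
    by (rule pr_lmi_truncate_states[OF wf' Gc T(5) r])
  thus ?thesis
    unfolding truncate_balanced_eq
    using sys_wf_truncate_states[OF wf'] pd_mat_leading_block[OF G r] by (rule is_passiveI[rotated 2])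
qed

lemma sys_D_truncate_balanced [simp]: "sys_D (truncate_balanced r \<Sigma> T Tinv) = sys_D \<Sigma>"
  by (cases \<Sigma>) (simp add: truncate_balanced_def Let_def)

lemma iodim_truncate_balanced [simp]: "iodim (truncate_balanced r \<Sigma> T Tinv) = iodim \<Sigma>"
  by (cases \<Sigma>) (simp add: truncate_balanced_def iodim_def Let_def)

section \<open>Parallel composition\<close>

definition parallel_pair :: "sys \<Rightarrow> sys \<Rightarrow> sys" where
  "parallel_pair \<Sigma>1 \<Sigma>2 = (block_diag (sys_A \<Sigma>1) (sys_A \<Sigma>2), block_diag (sys_B \<Sigma>1) (sys_B \<Sigma>2),
     block_diag (sys_C \<Sigma>1) (sys_C \<Sigma>2), block_diag (sys_D \<Sigma>1) (sys_D \<Sigma>2))"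

lemma parallel_Cons: "parallel (\<Sigma> # \<Sigma>s) = parallel_pair \<Sigma> (parallel \<Sigma>s)"
  by (simp add: parallel_def parallel_pair_def block_diag_def Let_def)

lemma sys_wf_parallel_pair:
  assumes "sys_wf \<Sigma>1 n1 p1" "sys_wf \<Sigma>2 n2 p2"
  shows "sys_wf (parallel_pair \<Sigma>1 \<Sigma>2) (n1 + n2) (p1 + p2)"
  using sys_wfD[OF assms(1)] sys_wfD[OF assms(2)]
  unfolding sys_wf_def parallel_pair_def by (auto intro!: block_diag_carrier)

lemma passivity_form_parallel_pair:
  assumes wf: "sys_wf \<Sigma>1 n1 p1" "sys_wf \<Sigma>2 n2 p2"
    and X: "X1 \<in> carrier_mat n1 n1" "X2 \<in> carrier_mat n2 n2"
    and x: "x1 \<in> carrier_vec n1" "x2 \<in> carrier_vec n2"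
    and v: "v1 \<in> carrier_vec p1" "v2 \<in> carrier_vec p2"
  shows "passivity_form (parallel_pair \<Sigma>1 \<Sigma>2) (block_diag X1 X2) (x1 @\<^sub>v x2) (v1 @\<^sub>v v2)
    = passivity_form \<Sigma>1 X1 x1 v1 + passivity_form \<Sigma>2 X2 x2 v2"
proof -
  note c1 = sys_wfD[OF wf(1)] and c2 = sys_wfD[OF wf(2)]
  let ?f1 = "sys_A \<Sigma>1 *\<^sub>v x1 + sys_B \<Sigma>1 *\<^sub>v v1" and ?f2 = "sys_A \<Sigma>2 *\<^sub>v x2 + sys_B \<Sigma>2 *\<^sub>v v2"
  let ?y1 = "sys_C \<Sigma>1 *\<^sub>v x1 + sys_D \<Sigma>1 *\<^sub>v v1" and ?y2 = "sys_C \<Sigma>2 *\<^sub>v x2 + sys_D \<Sigma>2 *\<^sub>v v2"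
  have f: "?f1 \<in> carrier_vec n1" "?f2 \<in> carrier_vec n2" and y: "?y1 \<in> carrier_vec p1" "?y2 \<in> carrier_vec p2"
    using c1 c2 x v by auto
  have "sys_A (parallel_pair \<Sigma>1 \<Sigma>2) *\<^sub>v (x1 @\<^sub>v x2) + sys_B (parallel_pair \<Sigma>1 \<Sigma>2) *\<^sub>v (v1 @\<^sub>v v2)
      = ?f1 @\<^sub>v ?f2"
    unfolding parallel_pair_def using c1 c2 x v
    by (simp add: block_diag_mult_vec append_vec_add[of _ n1 _ _ n2])
  moreover have "sys_C (parallel_pair \<Sigma>1 \<Sigma>2) *\<^sub>v (x1 @\<^sub>v x2) + sys_D (parallel_pair \<Sigma>1 \<Sigma>2) *\<^sub>v (v1 @\<^sub>v v2)
      = ?y1 @\<^sub>v ?y2"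
    unfolding parallel_pair_def using c1 c2 x v
    by (simp add: block_diag_mult_vec append_vec_add[of _ p1 _ _ p2])
  ultimately show ?thesis
    unfolding passivity_form_def using X x v f y
    by (simp add: block_diag_mult_vec scalar_prod_append[of _ n1 _ n2] scalar_prod_append[of _ p1 _ p2])
qed

lemma pr_lmi_parallel_pair:
  assumes wf: "sys_wf \<Sigma>1 n1 p1" "sys_wf \<Sigma>2 n2 p2"
    and X: "pd_mat n1 X1" "pd_mat n2 X2" and lmi: "pr_lmi \<Sigma>1 n1 p1 X1" "pr_lmi \<Sigma>2 n2 p2 X2"
  shows "pr_lmi (parallel_pair \<Sigma>1 \<Sigma>2) (n1 + n2) (p1 + p2) (block_diag X1 X2)"
proof -
  have Xc: "X1 \<in> carrier_mat n1 n1" "transpose_mat X1 = X1" "X2 \<in> carrier_mat n2 n2" "transpose_mat X2 = X2"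
    using X unfolding pd_mat_def by auto
  have X12: "block_diag X1 X2 \<in> carrier_mat (n1 + n2) (n1 + n2)"
    "transpose_mat (block_diag X1 X2) = block_diag X1 X2"
    using pd_mat_block_diag[OF X] unfolding pd_mat_def by auto
  show ?thesis
    using lmi passivity_form_parallel_pair[OF wf Xc(1,3)]
    unfolding pr_lmi_iff_passivity_form[OF sys_wf_parallel_pair[OF wf] X12] all_vec_append
      pr_lmi_iff_passivity_form[OF wf(1) Xc(1,2)] pr_lmi_iff_passivity_form[OF wf(2) Xc(3,4)]
    by (simp add: add_nonpos_nonpos)
qed

lemma is_passive_parallel_pair:
  assumes "is_passive \<Sigma>1" "is_passive \<Sigma>2"
  shows "is_passive (parallel_pair \<Sigma>1 \<Sigma>2)"
proof -
  obtain X1 where wf1: "sys_wf \<Sigma>1 (sdim \<Sigma>1) (iodim \<Sigma>1)"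
    and X1: "pd_mat (sdim \<Sigma>1) X1" "pr_lmi \<Sigma>1 (sdim \<Sigma>1) (iodim \<Sigma>1) X1"
    using assms(1) by (rule is_passiveE)
  obtain X2 where wf2: "sys_wf \<Sigma>2 (sdim \<Sigma>2) (iodim \<Sigma>2)"
    and X2: "pd_mat (sdim \<Sigma>2) X2" "pr_lmi \<Sigma>2 (sdim \<Sigma>2) (iodim \<Sigma>2) X2"
    using assms(2) by (rule is_passiveE)
  show ?thesis
    by (rule is_passiveI[OF sys_wf_parallel_pair[OF wf1 wf2] pd_mat_block_diag[OF X1(1) X2(1)]
          pr_lmi_parallel_pair[OF wf1 wf2 X1(1) X2(1) X1(2) X2(2)]])
qed

lemma is_passive_parallel:
  assumes "\<forall>\<Sigma> \<in> set \<Sigma>s. is_passive \<Sigma>"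
  shows "is_passive (parallel \<Sigma>s)"
  using assms
proof (induction \<Sigma>s)
  case Nil
  have wf: "sys_wf (parallel []) 0 0" unfolding parallel_def sys_wf_def by simp
  have empty: "v = 0\<^sub>v 0" if "v \<in> carrier_vec 0" for v :: "real vec"
    using that by (intro eq_vecI) auto
  have "pd_mat 0 (0\<^sub>m 0 0)" unfolding pd_mat_def using empty by auto
  moreover have "pr_lmi (parallel []) 0 0 (0\<^sub>m 0 0)"
    unfolding pr_lmi_iff_passivity_form[OF wf zero_carrier_mat zero_transpose_mat]
    by (auto simp: passivity_form_def scalar_prod_def parallel_def)
  ultimately show ?case using wf by (rule is_passiveI[rotated])
next
  case (Cons \<Sigma> \<Sigma>s)
  thus ?case unfolding parallel_Cons by (simp add: is_passive_parallel_pair)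
qed

lemma iodim_parallel: "iodim (parallel \<Sigma>s) = sum_list (map iodim \<Sigma>s)"
  unfolding iodim_def[abs_def] parallel_def by (simp add: dim_diag_block_mat comp_def)

section \<open>Interconnection\<close>

context
  fixes A B C D S Bc :: "real mat" and n q m :: nat
  assumes A: "A \<in> carrier_mat n n" and B: "B \<in> carrier_mat n q" and C: "C \<in> carrier_mat q n"
    and D: "D \<in> carrier_mat q q" and S: "S \<in> carrier_mat q q" and Bc: "Bc \<in> carrier_mat q m"
    and inv1: "invertible_mat (1\<^sub>m q + S * D)" and inv2: "invertible_mat (1\<^sub>m q + D * S)"
begin

lemma feedback_inverse_carrier:
  "inv_mat q (1\<^sub>m q + D * S) \<in> carrier_mat q q" "inv_mat q (1\<^sub>m q + S * D) \<in> carrier_mat q q"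
  using invertible_inv_mat(1) inv1 inv2 S D by auto

lemma interconnect_tuple:
  "interconnect (A, B, C, D) S Bc =
    (A - B * inv_mat q (1\<^sub>m q + S * D) * S * C, B * inv_mat q (1\<^sub>m q + S * D) * Bc,
     transpose_mat Bc * inv_mat q (1\<^sub>m q + D * S) * C, transpose_mat Bc * D * inv_mat q (1\<^sub>m q + S * D) * Bc)"
  unfolding interconnect_def Let_def using D by simp

lemma feedback_inverse_mult_vec:
  assumes y: "y \<in> carrier_vec q"
  defines "D1 \<equiv> inv_mat q (1\<^sub>m q + D * S)" and "D2 \<equiv> inv_mat q (1\<^sub>m q + S * D)"
  shows "D2 *\<^sub>v y + S *\<^sub>v (D *\<^sub>v (D2 *\<^sub>v y)) = y"
    and "D1 *\<^sub>v y = y - D *\<^sub>v (D2 *\<^sub>v (S *\<^sub>v y))"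
proof -
  have M1: "1\<^sub>m q + D * S \<in> carrier_mat q q" and M2: "1\<^sub>m q + S * D \<in> carrier_mat q q" using S D by auto
  note D1 = invertible_inv_mat[OF inv2 M1, folded D1_def]
  note D2 = invertible_inv_mat[OF inv1 M2, folded D2_def]
  have loop: "D2 *\<^sub>v y + S *\<^sub>v (D *\<^sub>v (D2 *\<^sub>v y)) = y" if y: "y \<in> carrier_vec q" for y
  proof -
    have "D2 *\<^sub>v y + S *\<^sub>v (D *\<^sub>v (D2 *\<^sub>v y)) = (1\<^sub>m q + S * D) *\<^sub>v (D2 *\<^sub>v y)"
      using S D D2 y by (simp add: add_mult_distrib_mat_vec[of _ q q] assoc_mult_mat_vec[of S q q D q])
    also have "\<dots> = y" using M2 D2 y by (simp flip: assoc_mult_mat_vec[of _ q q D2 q])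
    finally show ?thesis .
  qed
  thus "D2 *\<^sub>v y + S *\<^sub>v (D *\<^sub>v (D2 *\<^sub>v y)) = y" using y .
  define t where "t = y - D *\<^sub>v (D2 *\<^sub>v (S *\<^sub>v y))"
  have t: "t \<in> carrier_vec q" unfolding t_def using S D D2 y by simp
  have "S *\<^sub>v t = S *\<^sub>v y - S *\<^sub>v (D *\<^sub>v (D2 *\<^sub>v (S *\<^sub>v y)))"
    unfolding t_def using S D D2 y by (simp add: mult_minus_distrib_mat_vec[of S q q])
  also have "\<dots> = D2 *\<^sub>v (S *\<^sub>v y)"
    using loop[of "S *\<^sub>v y"] S D D2 y by (auto intro!: eq_vecI elim!: equalityE simp: vec_eq_iff)
  finally have "(1\<^sub>m q + D * S) *\<^sub>v t = y"
    using S D t y unfolding t_def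
    by (simp add: add_mult_distrib_mat_vec[of _ q q] assoc_mult_mat_vec[of D q q S q])
      (intro eq_vecI, auto)
  hence "D1 *\<^sub>v y = D1 *\<^sub>v ((1\<^sub>m q + D * S) *\<^sub>v t)" by simp
  also have "\<dots> = (D1 * (1\<^sub>m q + D * S)) *\<^sub>v t" by (rule assoc_mult_mat_vec[symmetric, OF D1(1) M1 t])
  also have "\<dots> = t" using D1 t by simp
  finally show "D1 *\<^sub>v y = y - D *\<^sub>v (D2 *\<^sub>v (S *\<^sub>v y))" unfolding t_def .
qed

(* In the next three lemmas, v is the input and C x + D v the output of the subsystems in
   closed loop, at state x and external input u. *)

lemma interconnect_state_equation:
  assumes x: "x \<in> carrier_vec n" and u: "u \<in> carrier_vec m"
  defines "v \<equiv> inv_mat q (1\<^sub>m q + S * D) *\<^sub>v (Bc *\<^sub>v u - S *\<^sub>v (C *\<^sub>v x))"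
  shows "sys_A (interconnect (A, B, C, D) S Bc) *\<^sub>v x + sys_B (interconnect (A, B, C, D) S Bc) *\<^sub>v u
    = A *\<^sub>v x + B *\<^sub>v v"
proof -
  define D2 where "D2 = inv_mat q (1\<^sub>m q + S * D)"
  have D2: "D2 \<in> carrier_mat q q" unfolding D2_def by (rule feedback_inverse_carrier(2))
  let ?p = "B *\<^sub>v (D2 *\<^sub>v (S *\<^sub>v (C *\<^sub>v x)))" and ?q = "B *\<^sub>v (D2 *\<^sub>v (Bc *\<^sub>v u))"
  have pq: "?p \<in> carrier_vec n" "?q \<in> carrier_vec n" using B C D2 S Bc x u by auto
  have "(A - B * D2 * S * C) *\<^sub>v x = A *\<^sub>v x - ?p"
    unfolding assoc_mult_mat_vec4[OF B D2 S C x, symmetric]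
    by (rule minus_mult_distrib_mat_vec[OF A _ x]) (use B D2 S C in auto)
  moreover have "(B * D2 * Bc) *\<^sub>v u = ?q" by (rule assoc_mult_mat_vec3[OF B D2 Bc u])
  moreover have "B *\<^sub>v v = ?q - ?p"
    unfolding v_def D2_def[symmetric] using B C D2 S Bc x u
    by (simp add: mult_minus_distrib_mat_vec[of D2 q q] mult_minus_distrib_mat_vec[of B n q])
  moreover have "(A *\<^sub>v x - ?p) + ?q = A *\<^sub>v x + (?q - ?p)"
    using A x pq by (intro eq_vecI) auto
  ultimately show ?thesis unfolding interconnect_tuple D2_def[symmetric] by simp
qed

lemma interconnect_output_equation:
  assumes x: "x \<in> carrier_vec n" and u: "u \<in> carrier_vec m"
  defines "v \<equiv> inv_mat q (1\<^sub>m q + S * D) *\<^sub>v (Bc *\<^sub>v u - S *\<^sub>v (C *\<^sub>v x))"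
  shows "sys_C (interconnect (A, B, C, D) S Bc) *\<^sub>v x + sys_D (interconnect (A, B, C, D) S Bc) *\<^sub>v u
    = transpose_mat Bc *\<^sub>v (C *\<^sub>v x + D *\<^sub>v v)"
proof -
  define D1 where "D1 = inv_mat q (1\<^sub>m q + D * S)"
  define D2 where "D2 = inv_mat q (1\<^sub>m q + S * D)"
  have D1: "D1 \<in> carrier_mat q q" and D2: "D2 \<in> carrier_mat q q"
    unfolding D1_def D2_def by (rule feedback_inverse_carrier)+
  have Bct: "transpose_mat Bc \<in> carrier_mat m q" using Bc by simp
  define w where "w = C *\<^sub>v x"
  have w: "w \<in> carrier_vec q" unfolding w_def using C x by simp
  let ?p = "D *\<^sub>v (D2 *\<^sub>v (S *\<^sub>v w))" and ?q = "D *\<^sub>v (D2 *\<^sub>v (Bc *\<^sub>v u))"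
  have pq: "?p \<in> carrier_vec q" "?q \<in> carrier_vec q" using D D2 S Bc w u by auto
  have "(transpose_mat Bc * D1 * C) *\<^sub>v x = transpose_mat Bc *\<^sub>v (w - ?p)"
    unfolding w_def assoc_mult_mat_vec3[OF Bct D1 C x]
    using feedback_inverse_mult_vec(2)[OF mult_mat_vec_carrier[OF C x]] by (simp add: D1_def D2_def)
  moreover have "(transpose_mat Bc * D * D2 * Bc) *\<^sub>v u = transpose_mat Bc *\<^sub>v ?q"
    by (rule assoc_mult_mat_vec4[OF Bct D D2 Bc u])
  moreover have "C *\<^sub>v x + D *\<^sub>v v = (w - ?p) + ?q"
  proof -
    have "D *\<^sub>v v = ?q - ?p"
      unfolding v_def D2_def[symmetric] w_def[symmetric] using D D2 S Bc w u
      by (simp add: mult_minus_distrib_mat_vec[of D2 q q] mult_minus_distrib_mat_vec[of D q q])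
    thus ?thesis unfolding w_def[symmetric] using w pq by (intro eq_vecI) auto
  qed
  ultimately show ?thesis
    unfolding interconnect_tuple D1_def[symmetric] D2_def[symmetric] using Bc w pq
    by (simp add: mult_add_distrib_mat_vec[of _ m q])
qed

lemma interconnect_loop_equation:
  assumes x: "x \<in> carrier_vec n" and u: "u \<in> carrier_vec m"
  defines "v \<equiv> inv_mat q (1\<^sub>m q + S * D) *\<^sub>v (Bc *\<^sub>v u - S *\<^sub>v (C *\<^sub>v x))"
  shows "Bc *\<^sub>v u = v + S *\<^sub>v (C *\<^sub>v x + D *\<^sub>v v)"
proof -
  have w: "C *\<^sub>v x \<in> carrier_vec q" and b: "Bc *\<^sub>v u \<in> carrier_vec q" using C Bc x u by auto
  hence v: "v \<in> carrier_vec q" unfolding v_def using feedback_inverse_carrier(2) S by auto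
  have "v + S *\<^sub>v (D *\<^sub>v v) = Bc *\<^sub>v u - S *\<^sub>v (C *\<^sub>v x)"
    unfolding v_def using feedback_inverse_mult_vec(1) S w b by simp
  thus ?thesis
    using S D Bc v w b
    by (simp add: mult_add_distrib_mat_vec[of S q q]) (intro eq_vecI, auto simp: vec_eq_iff)
qed

end

lemma sys_wf_interconnect:
  assumes wf: "sys_wf \<Sigma>b n q" and S: "S \<in> carrier_mat q q" and Bc: "Bc \<in> carrier_mat q m"
    and inv1: "invertible_mat (1\<^sub>m q + S * sys_D \<Sigma>b)" and inv2: "invertible_mat (1\<^sub>m q + sys_D \<Sigma>b * S)"
  shows "sys_wf (interconnect \<Sigma>b S Bc) n m"
proof -
  obtain A B C D where \<Sigma>b: "\<Sigma>b = (A, B, C, D)" by (cases \<Sigma>b)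
  have A: "A \<in> carrier_mat n n" and B: "B \<in> carrier_mat n q" and C: "C \<in> carrier_mat q n"
    and D: "D \<in> carrier_mat q q" using sys_wfD[OF wf] by (auto simp: \<Sigma>b)
  note loop = A B C D S Bc inv1[unfolded \<Sigma>b sys_components] inv2[unfolded \<Sigma>b sys_components]
  show ?thesis
    unfolding sys_wf_def \<Sigma>b interconnect_tuple[OF loop]
    using feedback_inverse_carrier[OF loop] A B C D S Bc by auto
qed

lemma pr_lmi_interconnect:
  assumes wf: "sys_wf \<Sigma>b n q" and X: "X \<in> carrier_mat n n" "transpose_mat X = X"
    and lmi: "pr_lmi \<Sigma>b n q X" and S: "psd_mat q S" and Bc: "Bc \<in> carrier_mat q m"
    and inv1: "invertible_mat (1\<^sub>m q + S * sys_D \<Sigma>b)" and inv2: "invertible_mat (1\<^sub>m q + sys_D \<Sigma>b * S)"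
  shows "pr_lmi (interconnect \<Sigma>b S Bc) n m X"
proof -
  obtain A B C D where \<Sigma>b: "\<Sigma>b = (A, B, C, D)" by (cases \<Sigma>b)
  have A: "A \<in> carrier_mat n n" and B: "B \<in> carrier_mat n q" and C: "C \<in> carrier_mat q n"
    and D: "D \<in> carrier_mat q q" using sys_wfD[OF wf] by (auto simp: \<Sigma>b)
  have Sc: "S \<in> carrier_mat q q" using S unfolding psd_mat_def by simp
  note loop = A B C D Sc Bc inv1[unfolded \<Sigma>b sys_components] inv2[unfolded \<Sigma>b sys_components]
  have "passivity_form (interconnect \<Sigma>b S Bc) X x u \<le> 0"
    if x: "x \<in> carrier_vec n" and u: "u \<in> carrier_vec m" for x u
  proof -
    define v where "v = inv_mat q (1\<^sub>m q + S * D) *\<^sub>v (Bc *\<^sub>v u - S *\<^sub>v (C *\<^sub>v x))"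
    define z where "z = C *\<^sub>v x + D *\<^sub>v v"
    have v: "v \<in> carrier_vec q" unfolding v_def using feedback_inverse_carrier(2)[OF loop] Sc Bc C x u by auto
    have z: "z \<in> carrier_vec q" unfolding z_def using C D x v by auto
    have "u \<bullet> (transpose_mat Bc *\<^sub>v z) = v \<bullet> z + z \<bullet> (S *\<^sub>v z)"
      using scalar_prod_transpose_mult_vec[OF Bc u z] Sc v z
      unfolding interconnect_loop_equation[OF loop x u, folded v_def z_def]
      by (simp add: add_scalar_prod_distrib[of _ q] comm_scalar_prod[of "S *\<^sub>v z" q z])
    hence "passivity_form (interconnect \<Sigma>b S Bc) X x u = passivity_form \<Sigma>b X x v - z \<bullet> (S *\<^sub>v z)"
      unfolding passivity_form_def \<Sigma>b interconnect_state_equation[OF loop x u, folded v_def]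
        interconnect_output_equation[OF loop x u, folded v_def z_def]
      by (simp add: z_def)
    moreover have "passivity_form \<Sigma>b X x v \<le> 0"
      using lmi x v unfolding pr_lmi_iff_passivity_form[OF wf X] by simp
    moreover have "0 \<le> z \<bullet> (S *\<^sub>v z)" using S z unfolding psd_mat_def by simp
    ultimately show ?thesis by simp
  qed
  thus ?thesis unfolding pr_lmi_iff_passivity_form[OF sys_wf_interconnect[OF wf Sc Bc inv1 inv2] X]
    by simp
qed

lemma is_passive_interconnect:
  assumes "is_passive \<Sigma>b" "psd_mat (iodim \<Sigma>b) S" "Bc \<in> carrier_mat (iodim \<Sigma>b) m"
    "invertible_mat (1\<^sub>m (iodim \<Sigma>b) + S * sys_D \<Sigma>b)"
    "invertible_mat (1\<^sub>m (iodim \<Sigma>b) + sys_D \<Sigma>b * S)"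
  shows "is_passive (interconnect \<Sigma>b S Bc)"
proof -
  obtain X where wf: "sys_wf \<Sigma>b (sdim \<Sigma>b) (iodim \<Sigma>b)"
    and X: "pd_mat (sdim \<Sigma>b) X" "pr_lmi \<Sigma>b (sdim \<Sigma>b) (iodim \<Sigma>b) X"
    using assms(1) by (rule is_passiveE)
  have S: "S \<in> carrier_mat (iodim \<Sigma>b) (iodim \<Sigma>b)" using assms(2) unfolding psd_mat_def by simp
  have Xc: "X \<in> carrier_mat (sdim \<Sigma>b) (sdim \<Sigma>b)" "transpose_mat X = X"
    using X(1) unfolding pd_mat_def by auto
  show ?thesis
    by (rule is_passiveI[OF sys_wf_interconnect[OF wf S assms(3-5)] X(1)
          pr_lmi_interconnect[OF wf Xc X(2) assms(2-5)]])
qed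

theorem theorem9:
  fixes \<Sigma>s :: "sys list" and S Bcal :: "real mat" and m :: nat
    and rs :: "nat list" and \<Sigma>hs :: "sys list" and \<Sigma>hc :: sys
  defines "q \<equiv> sum_list (map iodim \<Sigma>s)"
  defines "\<Sigma>c \<equiv> interconnect (parallel \<Sigma>s) S Bcal"
  assumes subsys: "\<forall>j < length \<Sigma>s. sys_wf (\<Sigma>s ! j) (sdim (\<Sigma>s ! j)) (iodim (\<Sigma>s ! j))
                       \<and> is_passive (\<Sigma>s ! j) \<and> is_minimal (\<Sigma>s ! j)"
    and S_psd: "psd_mat q S"
    and Bcal_dim: "Bcal \<in> carrier_mat q m"
    and inv1: "invertible_mat (1\<^sub>m q + S * sys_D (parallel \<Sigma>s))"
    and inv2: "invertible_mat (1\<^sub>m q + sys_D (parallel \<Sigma>s) * S)"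
    and c_passive: "is_passive \<Sigma>c"
    and c_minimal: "is_minimal \<Sigma>c"
    and c_stable: "asymp_stable \<Sigma>c"
    and orders: "length rs = length \<Sigma>s" "\<forall>j < length \<Sigma>s. rs ! j \<le> sdim (\<Sigma>s ! j)"
    and pibt: "PIBT \<Sigma>s S Bcal rs \<Sigma>hs \<Sigma>hc"
  shows "(\<forall>j < length \<Sigma>s. is_passive (\<Sigma>hs ! j)) \<and> is_passive \<Sigma>hc"
proof -
  obtain Pc where len: "length \<Sigma>hs = length \<Sigma>s" and \<Sigma>hc: "\<Sigma>hc = interconnect (parallel \<Sigma>hs) S Bcal"
    and reduction: "\<forall>j < length \<Sigma>s. \<exists>X T Tinv. available_storage (\<Sigma>s ! j) X \<and>
      balancing_transform (sdim (\<Sigma>s ! j)) (diag_sub_block Pc (state_offset \<Sigma>s j) (sdim (\<Sigma>s ! j)))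
        X T Tinv \<and> \<Sigma>hs ! j = truncate_balanced (rs ! j) (\<Sigma>s ! j) T Tinv"
    using pibt unfolding PIBT_def by blast
  have reduced: "is_passive (\<Sigma>hs ! j) \<and> iodim (\<Sigma>hs ! j) = iodim (\<Sigma>s ! j) \<and> sys_D (\<Sigma>hs ! j) = sys_D (\<Sigma>s ! j)"
    if j: "j < length \<Sigma>s" for j
    using reduction subsys orders(2) j unfolding available_storage_def
    by (metis is_passive_truncate_balanced iodim_truncate_balanced sys_D_truncate_balanced)
  have "map iodim \<Sigma>hs = map iodim \<Sigma>s" "map sys_D \<Sigma>hs = map sys_D \<Sigma>s"
    using reduced len by (auto intro: nth_equalityI)
  hence q: "iodim (parallel \<Sigma>hs) = q" and D: "sys_D (parallel \<Sigma>hs) = sys_D (parallel \<Sigma>s)"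
    unfolding q_def iodim_parallel by (simp_all add: parallel_def)
  have "is_passive (parallel \<Sigma>hs)"
    using reduced len by (intro is_passive_parallel) (metis in_set_conv_nth)
  hence "is_passive \<Sigma>hc"
    unfolding \<Sigma>hc using S_psd Bcal_dim inv1 inv2 by (intro is_passive_interconnect) (simp_all add: q D)
  thus ?thesis using reduced by blast
qed

end
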